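(* Let $0<q<1$ and let $|0\rangle$ be the normalized infinite-volume kink ground state with renormalized total $S^3$ equal to $0$. For every integer $x>0$, $$\langle 0|S^3_x|0\rangle=-\tfrac12+q^{2x}\sum_{k=0}^\infty(-1)^kq^{k(k+2x+1)}.$$ For every integer $x\le0$, $\langle0|S^3_x|0\rangle=-\langle0|S^3_{1-x}|0\rangle$. Moreover, there exist constants $C,c>0$ depending only on $q$ such that $p(m):=\langle0|S^3_{m-1}-S^3_m|0\rangle$ satisfies $0\le p(m)\le Ce^{-c|m|}$ for all $m\in\mathbb Z$.
   Context: Fix $0<q<1$, related to the anisotropy by $q+q^{-1}=2\Delta$ with $\Delta>1$. Let $\Omega^{+-}=\bigotimes_{x\le0}|\!\uparrow\rangle\otimes\bigotimes_{x>0}|\!\downarrow\rangle$, and let $\mathcal H$ be the incomplete tensor product space generated from it. Define the grand-canonical vector $$\psi(z)=\prod_{x\le0}(1+z^{-1}q^{-x}S^-_x)\prod_{x\ge1}(1+zq^{x}S^+_x)\,\Omega^{+-}$$ for $z\neq0$. Expand it as $\psi(z)=\sum_{n\in\mathbb Z}\psi_nz^n$. Explicitly, $\psi_n$ is the sum, over finite sets $A\subset\{x\le0\}$ and $B\subset\{x\ge1\}$ with $|B|-|A|=n$, of $\prod_{x\in A}q^{|x|}\prod_{y\in B}q^{y}$ times the vector obtained from $\Omega^{+-}$ by flipping the spins in $A\cup B$. The vector $\psi_n$ has renormalized total $S^3$ equal to $n$. The kink ground states are $|n\rangle=\psi_n/\|\psi_n\|$, $n\in\mathbb Z$. *)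

theory Defs
  imports "HOL-Analysis.Analysis"
begin

text \<open>Concrete model of the incomplete tensor product space generated from
  Omega^{+-}: it has the orthonormal basis e_D indexed by the finite sets D of
  integer sites at which the spin is flipped relative to Omega^{+-}
  (up on x \<le> 0, down on x \<ge> 1). A vector is represented by its
  (real) coefficient function on the finite subsets of the integers; all
  vectors considered here have real coefficients.\<close>

definition configs :: "int set set" where
  "configs = {D. finite D}"

definition inner_vec :: "(int set \<Rightarrow> real) \<Rightarrow> (int set \<Rightarrow> real) \<Rightarrow> real" where
  "inner_vec u v = (\<Sum>\<^sub>\<infinity>D\<in>configs. u D * v D)"

definition norm_vec :: "(int set \<Rightarrow> real) \<Rightarrow> real" where
  "norm_vec u = sqrt (inner_vec u u)"

definition spin3 :: "int \<Rightarrow> int set \<Rightarrow> real" where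
  "spin3 x D = (if x \<le> 0 then 1/2 else -1/2) * (if x \<in> D then -1 else 1)"

definition S3 :: "int \<Rightarrow> (int set \<Rightarrow> real) \<Rightarrow> (int set \<Rightarrow> real)" where
  "S3 x u = (\<lambda>D. spin3 x D * u D)"

definition psi :: "real \<Rightarrow> int \<Rightarrow> (int set \<Rightarrow> real)" where
  "psi q n = (\<lambda>D. if finite D \<and>
        int (card {y\<in>D. y \<ge> 1}) - int (card {x\<in>D. x \<le> 0}) = n
      then (\<Prod>x\<in>{x\<in>D. x \<le> 0}. q ^ nat \<bar>x\<bar>) * (\<Prod>y\<in>{y\<in>D. y \<ge> 1}. q ^ nat y)
      else 0)"

definition kink :: "real \<Rightarrow> int \<Rightarrow> (int set \<Rightarrow> real)" where
  "kink q n = (\<lambda>D. psi q n D / norm_vec (psi q n))"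

definition magn :: "real \<Rightarrow> int \<Rightarrow> real" where
  "magn q x = inner_vec (kink q 0) (S3 x (kink q 0))"

end

theory Submission
  imports Defs
begin

text \<open>The squared coefficient of e_D in psi_0 is the weight q^(2 E(D)), where E(D) is
  the sum of |x| over x in D, on the configurations D of charge
  #(D \<inter> [1,\<infinity>)) - #(D \<inter> (-\<infinity>,0]) equal to 0. Writing Z_c for the total weight of
  charge c and H_c(x) for the weight of the configurations of charge c containing x,
  the magnetization is <0|S^3_x|0> = \<plusminus>(1/2 - H_0(x) / Z_0).

  Removing an occupied site y \<ge> 1 gives H_c(y) = q^(2y) (Z_(c-1) - H_(c-1)(y)), and
  translating the kink by one site gives Z_(-n) = q^(n(n-1)) Z_0; iterating the first
  identity downwards in c yields the alternating series. The reflection x \<mapsto> 1 - x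
  preserves the weights of charge-0 configurations, whence the antisymmetry. Moving a
  particle from y + 1 to y \<ge> 1, or removing the pair {0, 1}, lowers E by one, so H_0
  decreases on [1,\<infinity>) and 2 H_0(0) \<le> Z_0; together with H_0(y) \<le> q^(2y) Z_0 this
  bounds p(m) by q^(2|m-1|).\<close>

lemma summable_on_prod_finite_subsets:
  fixes b :: "'a \<Rightarrow> real"
  assumes nonneg: "\<And>x. 0 \<le> b x" and summable: "b summable_on UNIV"
  shows "(\<lambda>D. \<Prod>x\<in>D. b x) summable_on {D. finite D}"
proof (rule nonneg_bdd_above_summable_on)
  show "0 \<le> (\<Prod>x\<in>D. b x)" for D
    using nonneg by (simp add: prod_nonneg)
  show "bdd_above (sum (\<lambda>D. \<Prod>x\<in>D. b x) ` {F. F \<subseteq> {D. finite D} \<and> finite F})"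
  proof (rule bdd_aboveI2)
    fix F :: "'a set set" assume F: "F \<in> {F. F \<subseteq> {D. finite D} \<and> finite F}"
    then have I: "finite (\<Union>F)" by auto
    have "(\<Sum>D\<in>F. \<Prod>x\<in>D. b x) \<le> (\<Sum>D\<in>Pow (\<Union>F). \<Prod>x\<in>D. b x)"
      using F I nonneg by (intro sum_mono2) (auto simp: prod_nonneg)
    also have "\<dots> = (\<Sum>D\<in>Pow (\<Union>F). (\<Prod>x\<in>D. b x) * (\<Prod>x\<in>\<Union>F - D. 1))"
      by simp
    also have "\<dots> = (\<Prod>x\<in>\<Union>F. b x + 1)"
      using I by (rule prod_add[symmetric])
    also have "\<dots> \<le> (\<Prod>x\<in>\<Union>F. exp (b x))"
      using nonneg by (intro prod_mono) (auto simp: add.commute)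
    also have "\<dots> = exp (\<Sum>x\<in>\<Union>F. b x)"
      using I by (simp add: exp_sum)
    also have "\<dots> \<le> exp (\<Sum>\<^sub>\<infinity>x. b x)"
      using I nonneg by (simp add: finite_sum_le_infsum summable)
    finally show "(\<Sum>D\<in>F. \<Prod>x\<in>D. b x) \<le> exp (\<Sum>\<^sub>\<infinity>x. b x)" .
  qed
qed

lemma summable_on_power_abs_int:
  fixes a :: real
  assumes "0 \<le> a" "a < 1"
  shows "(\<lambda>x::int. a ^ nat \<bar>x\<bar>) summable_on UNIV"
proof -
  have geom: "(\<lambda>n. a ^ n) summable_on UNIV"
    using assms by (intro norm_summable_imp_summable_on) (simp add: summable_geometric)
  have "(\<lambda>x::int. a ^ nat \<bar>x\<bar>) summable_on range int \<union> range (\<lambda>n. - int n)"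
    using geom by (intro summable_on_union) (simp_all add: summable_on_reindex inj_on_def o_def)
  moreover have "range int \<union> range (\<lambda>n. - int n) = UNIV"
  proof -
    have "x = int (nat x) \<or> x = - int (nat (- x))" for x :: int
      by linarith
    then show ?thesis
      by blast
  qed
  ultimately show ?thesis by simp
qed

definition energy :: "int set \<Rightarrow> nat" where
  "energy D = (\<Sum>x\<in>D. nat \<bar>x\<bar>)"

definition site_charge :: "int \<Rightarrow> int" where
  "site_charge x = (if x \<ge> 1 then 1 else -1)"

definition charge :: "int set \<Rightarrow> int" where
  "charge D = (\<Sum>x\<in>D. site_charge x)"

definition weight :: "real \<Rightarrow> int set \<Rightarrow> real" where
  "weight q D = q ^ (2 * energy D)"

definition weight_sum :: "real \<Rightarrow> (int set \<Rightarrow> bool) \<Rightarrow> real" where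
  "weight_sum q P = (\<Sum>\<^sub>\<infinity>D\<in>{D\<in>configs. P D}. weight q D)"

lemma mem_configs_iff [simp]: "D \<in> configs \<longleftrightarrow> finite D"
  by (simp add: configs_def)

lemma weight_nonneg: "0 \<le> weight q D"
  by (simp add: weight_def power_mult)

lemma weight_eq_prod: "finite D \<Longrightarrow> weight q D = (\<Prod>x\<in>D. (q\<^sup>2) ^ nat \<bar>x\<bar>)"
  by (simp add: weight_def energy_def power_sum power_mult)

lemma weight_summable_on:
  assumes "\<bar>q\<bar> < 1"
  shows "weight q summable_on {D\<in>configs. P D}"
proof (rule summable_on_subset_banach)
  have "(\<lambda>D. \<Prod>x\<in>D. (q\<^sup>2) ^ nat \<bar>x\<bar>) summable_on {D. finite D}"
    using assms by (intro summable_on_prod_finite_subsets summable_on_power_abs_int)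
      (simp_all add: abs_square_less_1)
  then show "weight q summable_on configs"
    by (subst summable_on_cong[where g = "\<lambda>D. \<Prod>x\<in>D. (q\<^sup>2) ^ nat \<bar>x\<bar>"])
      (simp_all add: weight_eq_prod configs_def)
qed auto

lemma weight_sum_nonneg: "0 \<le> weight_sum q P"
  unfolding weight_sum_def by (intro infsum_nonneg weight_nonneg)

lemma weight_sum_split:
  assumes "\<bar>q\<bar> < 1"
  shows "weight_sum q P = weight_sum q (\<lambda>D. P D \<and> Q D) + weight_sum q (\<lambda>D. P D \<and> \<not> Q D)"
proof -
  have "{D\<in>configs. P D} = {D\<in>configs. P D \<and> Q D} \<union> {D\<in>configs. P D \<and> \<not> Q D}"
    by auto
  then show ?thesis
    unfolding weight_sum_def using assms
    by (simp only:) (intro infsum_Un_disjoint weight_summable_on; auto)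
qed

lemma weight_sum_mono:
  assumes "\<bar>q\<bar> < 1" "\<And>D. P D \<Longrightarrow> Q D"
  shows "weight_sum q P \<le> weight_sum q Q"
  unfolding weight_sum_def using assms
  by (intro infsum_mono_neutral weight_summable_on) (auto simp: weight_nonneg)

lemma weight_sum_reindex:
  assumes "bij_betw f {D\<in>configs. P D} {D\<in>configs. Q D}"
    and "\<And>D. finite D \<Longrightarrow> P D \<Longrightarrow> weight q D = c * weight q (f D)"
  shows "weight_sum q P = c * weight_sum q Q"
proof -
  have "weight_sum q P = (\<Sum>\<^sub>\<infinity>D\<in>{D\<in>configs. P D}. c * weight q (f D))"
    unfolding weight_sum_def using assms(2) by (intro infsum_cong) auto
  also have "\<dots> = c * weight_sum q Q"
    unfolding weight_sum_def infsum_cmult_right' infsum_reindex_bij_betw[OF assms(1)] ..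
  finally show ?thesis .
qed

lemma sum_exchange:
  assumes "finite D" "finite V" "U \<subseteq> D" "D \<inter> V = {}"
  shows "sum f (D - U \<union> V) + sum f U = sum f D + sum f V"
proof -
  have "sum f (D - U \<union> V) = sum f (D - U) + sum f V"
    using assms by (intro sum.union_disjoint) auto
  moreover have "sum f D = sum f (D - U) + sum f U"
    using assms by (intro sum.subset_diff)
  ultimately show ?thesis by (simp add: ac_simps)
qed

lemma weight_sum_exchange:
  assumes "finite U" "finite V" "U \<inter> V = {}" "energy U = energy V + k"
  shows "weight_sum q (\<lambda>D. charge D = c + charge U \<and> U \<subseteq> D \<and> D \<inter> V = {})
    = q ^ (2 * k) * weight_sum q (\<lambda>D. charge D = c + charge V \<and> V \<subseteq> D \<and> D \<inter> U = {})"
proof (rule weight_sum_reindex)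
  let ?A = "\<lambda>U V. {D\<in>configs. charge D = c + charge U \<and> U \<subseteq> D \<and> D \<inter> V = {}}"
  have into: "(\<lambda>D. D - U \<union> V) ` ?A U V \<subseteq> ?A V U"
    if "finite V" "U \<inter> V = {}" for U V
    using that sum_exchange[of _ V U site_charge] by (fastforce simp: charge_def)
  show "bij_betw (\<lambda>D. D - U \<union> V) (?A U V) (?A V U)"
    by (rule bij_betw_byWitness[where f' = "\<lambda>D. D - V \<union> U"])
      (use assms into[of V U] into[of U V] in auto)
  show "weight q D = q ^ (2 * k) * weight q (D - U \<union> V)"
    if "finite D" "charge D = c + charge U \<and> U \<subseteq> D \<and> D \<inter> V = {}" for D
  proof -
    have "energy D = k + energy (D - U \<union> V)"
      using sum_exchange[of D V U "\<lambda>x. nat \<bar>x\<bar>"] that assms by (simp add: energy_def)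
    then show ?thesis by (simp add: weight_def power_add)
  qed
qed

definition partition_fn :: "real \<Rightarrow> int \<Rightarrow> real" where
  "partition_fn q c = weight_sum q (\<lambda>D. charge D = c)"

definition occupation :: "real \<Rightarrow> int \<Rightarrow> int \<Rightarrow> real" where
  "occupation q c y = weight_sum q (\<lambda>D. charge D = c \<and> y \<in> D)"

lemma occupation_nonneg: "0 \<le> occupation q c y"
  unfolding occupation_def by (rule weight_sum_nonneg)

lemma occupation_le_partition_fn: "\<bar>q\<bar> < 1 \<Longrightarrow> occupation q c y \<le> partition_fn q c"
  unfolding occupation_def partition_fn_def by (rule weight_sum_mono) auto

lemma one_le_partition_fn_zero:
  assumes "\<bar>q\<bar> < 1"
  shows "1 \<le> partition_fn q 0"
proof -
  have "weight q {} \<le> partition_fn q 0"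
    unfolding partition_fn_def weight_sum_def using assms
    by (intro finite_sum_le_infsum[of _ _ "{{}}", simplified] weight_summable_on)
      (auto simp: charge_def weight_nonneg)
  then show ?thesis by (simp add: weight_def energy_def)
qed

lemma occupation_succ:
  assumes "\<bar>q\<bar> < 1" "y \<ge> 1"
  shows "occupation q (c + 1) y = q ^ (2 * nat y) * (partition_fn q c - occupation q c y)"
proof -
  have "occupation q (c + 1) y = q ^ (2 * nat y) * weight_sum q (\<lambda>D. charge D = c \<and> y \<notin> D)"
    using weight_sum_exchange[of "{y}" "{}" "nat y" q c] assms
    by (simp add: occupation_def charge_def site_charge_def energy_def)
  moreover have "partition_fn q c = occupation q c y + weight_sum q (\<lambda>D. charge D = c \<and> y \<notin> D)"
    unfolding partition_fn_def occupation_def by (rule weight_sum_split[OF assms(1)])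
  ultimately show ?thesis by simp
qed

definition toggle :: "'a \<Rightarrow> 'a set \<Rightarrow> 'a set" where
  "toggle x D = (if x \<in> D then D - {x} else insert x D)"

lemma toggle_toggle [simp]: "toggle x (toggle x D) = D"
  unfolding toggle_def by auto

lemma finite_toggle [simp]: "finite (toggle x D) \<longleftrightarrow> finite D"
  unfolding toggle_def by auto

text \<open>Translation by one site maps Omega^{+-} to the state in which site 1 is flipped,
  hence it maps e_D to e_D' with D' = kink_shift D.\<close>
definition kink_shift :: "int set \<Rightarrow> int set" where
  "kink_shift D = (\<lambda>x. x + 1) ` toggle 0 D"

lemma kink_shift_inverse:
  "toggle 0 ((\<lambda>x. x - 1) ` kink_shift D) = D"
  "kink_shift (toggle 0 ((\<lambda>x. x - 1) ` D)) = D"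
  by (simp_all add: kink_shift_def image_image)

lemma finite_kink_shift [simp]: "finite (kink_shift D) \<longleftrightarrow> finite D"
  by (simp add: kink_shift_def finite_image_iff inj_on_def)

lemma site_charge_succ: "x \<noteq> 0 \<Longrightarrow> site_charge (x + 1) = site_charge x"
  by (simp add: site_charge_def)

lemma charge_kink_shift:
  assumes "finite D"
  shows "charge (kink_shift D) = charge D + 1"
proof -
  have "charge (kink_shift D) = (\<Sum>x\<in>toggle 0 D. site_charge (x + 1))"
    unfolding kink_shift_def charge_def by (simp add: sum.reindex inj_on_def)
  also have "\<dots> = charge D + 1"
  proof (cases "0 \<in> D")
    case True
    then have "charge D = site_charge 0 + (\<Sum>x\<in>D - {0}. site_charge x)"
      using assms by (simp add: charge_def sum.remove)
    moreover have "(\<Sum>x\<in>D - {0}. site_charge (x + 1)) = (\<Sum>x\<in>D - {0}. site_charge x)"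
      by (intro sum.cong) (auto simp: site_charge_succ)
    ultimately show ?thesis
      using True by (simp add: toggle_def site_charge_def)
  next
    case False
    then have "(\<Sum>x\<in>D. site_charge (x + 1)) = charge D"
      unfolding charge_def by (intro sum.cong refl site_charge_succ) (use False in blast)
    then show ?thesis
      using False assms by (simp add: toggle_def site_charge_def)
  qed
  finally show ?thesis .
qed

lemma energy_kink_shift:
  assumes "finite D"
  shows "int (energy (kink_shift D)) = int (energy D) + charge D + 1"
proof -
  have "int (energy (kink_shift D)) = (\<Sum>x\<in>toggle 0 D. int (nat \<bar>x\<bar>) + site_charge (x + 1))"
    unfolding kink_shift_def energy_def
    by (simp add: sum.reindex inj_on_def site_charge_def) (intro sum.cong; auto)
  also have "\<dots> = int (energy (toggle 0 D)) + charge (kink_shift D)"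
    unfolding kink_shift_def energy_def charge_def
    by (simp add: sum.distrib sum.reindex inj_on_def)
  also have "energy (toggle 0 D) = energy D"
    unfolding energy_def toggle_def using assms by (simp add: sum.remove)
  finally show ?thesis
    using charge_kink_shift[OF assms] by simp
qed

lemma partition_fn_shift:
  assumes "\<bar>q\<bar> < 1" "c \<le> -1"
  shows "partition_fn q c = q ^ (2 * nat (- c - 1)) * partition_fn q (c + 1)"
  unfolding partition_fn_def
proof (rule weight_sum_reindex)
  show "bij_betw kink_shift {D \<in> configs. charge D = c} {D \<in> configs. charge D = c + 1}"
  proof (rule bij_betw_byWitness[where f' = "\<lambda>D. toggle 0 ((\<lambda>x. x - 1) ` D)"])
    show "(\<lambda>D. toggle 0 ((\<lambda>x. x - 1) ` D)) ` {D \<in> configs. charge D = c + 1}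
      \<subseteq> {D \<in> configs. charge D = c}"
    proof safe
      fix D :: "int set" assume D: "D \<in> configs" "charge D = c + 1"
      then show "toggle 0 ((\<lambda>x. x - 1) ` D) \<in> configs"
        by simp
      then show "charge (toggle 0 ((\<lambda>x. x - 1) ` D)) = c"
        using charge_kink_shift[of "toggle 0 ((\<lambda>x. x - 1) ` D)"] D
        by (simp add: kink_shift_inverse)
    qed
  qed (simp_all add: kink_shift_inverse charge_kink_shift image_subset_iff)
  show "weight q D = q ^ (2 * nat (- c - 1)) * weight q (kink_shift D)"
    if "finite D" "charge D = c" for D
  proof -
    have "energy D = nat (- c - 1) + energy (kink_shift D)"
      using energy_kink_shift[OF that(1)] that assms(2) by simp
    then show ?thesis by (simp add: weight_def power_add)
  qed
qed

lemma partition_fn_neg: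
  assumes "\<bar>q\<bar> < 1"
  shows "partition_fn q (- int n) = q ^ (n * (n - 1)) * partition_fn q 0"
proof (induction n)
  case (Suc n)
  have "partition_fn q (- int (Suc n)) = q ^ (2 * n) * partition_fn q (- int n)"
    using partition_fn_shift[OF assms, of "- int (Suc n)"] by simp
  also have "\<dots> = q ^ (2 * n + n * (n - 1)) * partition_fn q 0"
    by (simp add: Suc power_add)
  also have "2 * n + n * (n - 1) = Suc n * (Suc n - 1)"
    by (cases n) (auto simp: algebra_simps)
  finally show ?case .
qed simp

lemma partition_fn_neg_le:
  assumes "\<bar>q\<bar> < 1"
  shows "partition_fn q (- int n) \<le> partition_fn q 0"
proof -
  have "q ^ (n * (n - 1)) \<le> \<bar>q\<bar> ^ (n * (n - 1))"
    by (metis abs_ge_self power_abs)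
  also have "\<dots> \<le> 1"
    using assms by (simp add: power_le_one)
  finally show ?thesis
    using partition_fn_neg[OF assms, of n] one_le_partition_fn_zero[OF assms]
    by (simp add: mult_left_le_one_le)
qed

definition kink_reflect :: "int set \<Rightarrow> int set" where
  "kink_reflect D = (\<lambda>x. 1 - x) ` D"

lemma kink_reflect_kink_reflect [simp]: "kink_reflect (kink_reflect D) = D"
  by (simp add: kink_reflect_def image_image)

lemma finite_kink_reflect [simp]: "finite (kink_reflect D) \<longleftrightarrow> finite D"
  by (simp add: kink_reflect_def finite_image_iff inj_on_def)

lemma mem_kink_reflect_iff: "x \<in> kink_reflect D \<longleftrightarrow> 1 - x \<in> D"
  by (force simp: kink_reflect_def)

lemma charge_kink_reflect: "finite D \<Longrightarrow> charge (kink_reflect D) = - charge D"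
  unfolding kink_reflect_def charge_def
  by (simp add: sum.reindex inj_on_def sum_negf[symmetric] site_charge_def)
    (intro sum.cong; auto)

lemma energy_kink_reflect: "finite D \<Longrightarrow> int (energy (kink_reflect D)) = int (energy D) - charge D"
  unfolding kink_reflect_def energy_def charge_def
  by (simp add: sum.reindex inj_on_def sum_subtractf[symmetric] site_charge_def)
    (intro sum.cong; auto)

lemma occupation_reflect: "occupation q 0 x = occupation q 0 (1 - x)"
proof -
  have "occupation q 0 x = 1 * occupation q 0 (1 - x)"
    unfolding occupation_def
  proof (rule weight_sum_reindex)
    show "bij_betw kink_reflect {D \<in> configs. charge D = 0 \<and> x \<in> D}
      {D \<in> configs. charge D = 0 \<and> 1 - x \<in> D}"
      by (rule bij_betw_byWitness[where f' = kink_reflect])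
        (auto simp: charge_kink_reflect mem_kink_reflect_iff)
    show "weight q D = 1 * weight q (kink_reflect D)" if "finite D" "charge D = 0 \<and> x \<in> D" for D
      using energy_kink_reflect[of D] that by (simp add: weight_def)
  qed
  then show ?thesis by simp
qed

lemma occupation_antimono:
  assumes "\<bar>q\<bar> < 1" "y \<ge> 1"
  shows "occupation q 0 (y + 1) \<le> occupation q 0 y"
proof -
  let ?W = "weight_sum q"
  have hop: "?W (\<lambda>D. charge D = 0 \<and> y + 1 \<in> D \<and> y \<notin> D)
    = q\<^sup>2 * ?W (\<lambda>D. charge D = 0 \<and> y \<in> D \<and> y + 1 \<notin> D)"
    using weight_sum_exchange[of "{y + 1}" "{y}" 1 q "-1"] assms(2)
    by (simp add: charge_def site_charge_def energy_def)
  have "occupation q 0 (y + 1) = ?W (\<lambda>D. charge D = 0 \<and> y \<in> D \<and> y + 1 \<in> D)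
      + ?W (\<lambda>D. charge D = 0 \<and> y + 1 \<in> D \<and> y \<notin> D)"
    unfolding occupation_def
    by (subst weight_sum_split[OF assms(1), where Q = "\<lambda>D. y \<in> D"]) (simp add: conj_ac)
  moreover have "occupation q 0 y = ?W (\<lambda>D. charge D = 0 \<and> y \<in> D \<and> y + 1 \<in> D)
      + ?W (\<lambda>D. charge D = 0 \<and> y \<in> D \<and> y + 1 \<notin> D)"
    unfolding occupation_def
    by (subst weight_sum_split[OF assms(1), where Q = "\<lambda>D. y + 1 \<in> D"]) (simp add: conj_ac)
  moreover have "q\<^sup>2 \<le> 1"
    using assms(1) by (simp add: abs_square_le_1)
  ultimately show ?thesis
    using hop weight_sum_nonneg[of q] by (simp add: mult_left_le_one_le)
qed

lemma occupation_zero_add_one_le: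
  assumes "\<bar>q\<bar> < 1"
  shows "occupation q 0 0 + occupation q 0 1 \<le> partition_fn q 0"
proof -
  let ?W = "\<lambda>a b. weight_sum q (\<lambda>D. charge D = 0 \<and> (0 \<in> D \<longleftrightarrow> a) \<and> (1 \<in> D \<longleftrightarrow> b))"
  have pair: "?W True True = q\<^sup>2 * ?W False False"
    using weight_sum_exchange[of "{0, 1}" "{}" 1 q 0]
    by (simp add: charge_def site_charge_def energy_def)
  have "occupation q 0 0 = ?W True True + ?W True False"
    unfolding occupation_def by (subst weight_sum_split[OF assms, where Q = "\<lambda>D. 1 \<in> D"]) simp
  moreover have "occupation q 0 1 = ?W True True + ?W False True"
    unfolding occupation_def
    by (subst weight_sum_split[OF assms, where Q = "\<lambda>D. 0 \<in> D"]) (simp add: conj_ac)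
  moreover have "partition_fn q 0 = ?W True True + ?W True False + ?W False True + ?W False False"
    unfolding partition_fn_def
    by (subst weight_sum_split[OF assms, where Q = "\<lambda>D. 0 \<in> D"],
        subst (1 2) weight_sum_split[OF assms, where Q = "\<lambda>D. 1 \<in> D"]) simp
  moreover have "q\<^sup>2 \<le> 1"
    using assms by (simp add: abs_square_le_1)
  ultimately show ?thesis
    using pair weight_sum_nonneg[of q] by (simp add: mult_left_le_one_le)
qed

lemma occupation_le:
  assumes "\<bar>q\<bar> < 1" "y \<ge> 1"
  shows "occupation q 0 y \<le> q ^ (2 * nat y) * partition_fn q 0"
proof -
  have "partition_fn q (-1) = partition_fn q 0"
    using partition_fn_neg[OF assms(1), of 1] by simp
  then show ?thesis
    using occupation_succ[OF assms, of "-1"] occupation_nonneg[of q "-1" y]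
    by (simp add: mult_left_mono)
qed

lemma charge_eq_card:
  assumes "finite D"
  shows "charge D = int (card {y\<in>D. y \<ge> 1}) - int (card {x\<in>D. x \<le> 0})"
proof -
  have "{x\<in>D. \<not> 1 \<le> x} = {x\<in>D. x \<le> 0}"
    by auto
  then show ?thesis
    using assms by (simp add: charge_def site_charge_def sum.If_cases Int_def conj_commute)
qed

lemma psi_zero_eq:
  assumes "finite D"
  shows "psi q 0 D = (if charge D = 0 then q ^ energy D else 0)"
proof -
  have "(\<Prod>x\<in>{x\<in>D. x \<le> 0}. q ^ nat \<bar>x\<bar>) * (\<Prod>y\<in>{y\<in>D. y \<ge> 1}. q ^ nat y)
      = (\<Prod>x\<in>{x\<in>D. x \<le> 0} \<union> {y\<in>D. y \<ge> 1}. q ^ nat \<bar>x\<bar>)"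
    using assms by (subst prod.union_disjoint) (auto intro!: prod.cong)
  also have "{x\<in>D. x \<le> 0} \<union> {y\<in>D. y \<ge> 1} = D"
    by auto
  finally show ?thesis
    using assms by (simp add: psi_def charge_eq_card energy_def power_sum)
qed

lemma psi_zero_sq: "finite D \<Longrightarrow> psi q 0 D * psi q 0 D = (if charge D = 0 then weight q D else 0)"
  by (simp add: psi_zero_eq weight_def power_mult_distrib power_add[symmetric] mult_2)

lemma norm_psi_zero_sq:
  assumes "\<bar>q\<bar> < 1"
  shows "(norm_vec (psi q 0))\<^sup>2 = partition_fn q 0"
proof -
  have "inner_vec (psi q 0) (psi q 0) = partition_fn q 0"
    unfolding inner_vec_def partition_fn_def weight_sum_def
    by (rule infsum_cong_neutral) (auto simp: psi_zero_sq)
  then show ?thesis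
    using one_le_partition_fn_zero[OF assms] by (simp add: norm_vec_def)
qed

lemma magn_eq:
  assumes "\<bar>q\<bar> < 1"
  shows "magn q x = (if x \<le> 0 then 1 else -1) * (1/2 - occupation q 0 x / partition_fn q 0)"
proof -
  let ?Z = "partition_fn q 0" and ?T = "{D\<in>configs. charge D = 0}"
  let ?s = "(if x \<le> 0 then 1/2 else -1/2) :: real"
  let ?occ = "\<lambda>D. if x \<in> D then weight q D else 0"
  have Z: "?Z > 0"
    using one_le_partition_fn_zero[OF assms] by simp
  have "magn q x = (\<Sum>\<^sub>\<infinity>D\<in>?T. ?s / ?Z * weight q D + (- 2 * ?s / ?Z) * ?occ D)"
    unfolding magn_def inner_vec_def S3_def kink_def
  proof (rule infsum_cong_neutral)
    fix D assume "D \<in> configs \<inter> ?T"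
    then show "psi q 0 D / norm_vec (psi q 0) * (spin3 x D * (psi q 0 D / norm_vec (psi q 0)))
      = ?s / ?Z * weight q D + (- 2 * ?s / ?Z) * ?occ D"
      using psi_zero_sq[of D q]
      by (simp add: norm_psi_zero_sq[OF assms, symmetric] spin3_def power2_eq_square)
  qed (auto simp: psi_zero_eq)
  also have "\<dots> = ?s / ?Z * ?Z + (- 2 * ?s / ?Z) * occupation q 0 x"
  proof -
    have "?occ summable_on ?T"
      using weight_summable_on[OF assms]
      by (rule summable_on_comparison_test) (auto simp: weight_nonneg)
    then have "(\<Sum>\<^sub>\<infinity>D\<in>?T. ?s / ?Z * weight q D + (- 2 * ?s / ?Z) * ?occ D)
        = ?s / ?Z * (\<Sum>\<^sub>\<infinity>D\<in>?T. weight q D) + (- 2 * ?s / ?Z) * (\<Sum>\<^sub>\<infinity>D\<in>?T. ?occ D)"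
      using weight_summable_on[OF assms]
      by (simp only: infsum_add summable_on_cmult_right infsum_cmult_right')
    moreover have "(\<Sum>\<^sub>\<infinity>D\<in>?T. ?occ D) = occupation q 0 x"
      unfolding occupation_def weight_sum_def by (rule infsum_cong_neutral) auto
    ultimately show ?thesis
      by (simp add: partition_fn_def weight_sum_def)
  qed
  finally show ?thesis
    using Z by (cases "x \<le> 0") (simp_all add: field_simps)
qed

lemma magn_reflect:
  assumes "\<bar>q\<bar> < 1"
  shows "magn q x = - magn q (1 - x)"
  using magn_eq[OF assms, of x] magn_eq[OF assms, of "1 - x"] occupation_reflect[of q x]
  by auto

lemma sums_alternating_recurrence:
  fixes r g :: "nat \<Rightarrow> real"
  assumes rec: "\<And>n. r n = t * (g n - r (Suc n))" and "\<bar>t\<bar> < 1" and "Bseq r"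
  shows "(\<lambda>k. (-t) ^ k * t * g k) sums r 0"
proof -
  have partial: "(\<Sum>k<n. (-t) ^ k * t * g k) = r 0 - (-t) ^ n * r n" for n
  proof (induction n)
    case (Suc n)
    have "(-t) ^ n * r n = (-t) ^ n * t * g n + (-t) ^ Suc n * r (Suc n)"
      by (subst rec[of n]) (simp add: algebra_simps)
    with Suc.IH show ?case
      by simp
  qed simp
  obtain K where K: "\<And>n. \<bar>r n\<bar> \<le> K"
    using \<open>Bseq r\<close> by (auto simp: Bseq_def)
  have "(\<lambda>n. (-t) ^ n * r n) \<longlonglongrightarrow> 0"
  proof (rule Lim_null_comparison)
    show "\<forall>\<^sub>F n in sequentially. norm ((-t) ^ n * r n) \<le> \<bar>t\<bar> ^ n * K"
      using K by (simp add: abs_mult power_abs mult_left_mono)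
    show "(\<lambda>n. \<bar>t\<bar> ^ n * K) \<longlonglongrightarrow> 0"
      using assms(2) by (intro tendsto_mult_left_zero LIMSEQ_power_zero) simp
  qed
  then have "(\<lambda>n. r 0 - (-t) ^ n * r n) \<longlonglongrightarrow> r 0 - 0"
    by (intro tendsto_diff tendsto_const)
  then show ?thesis
    unfolding sums_def partial by simp
qed

lemma occupation_series:
  assumes "\<bar>q\<bar> < 1" "y \<ge> 1"
  shows "occupation q 0 y
    = q ^ (2 * nat y) * partition_fn q 0 * (\<Sum>k. (-1) ^ k * q ^ (k * (k + 2 * nat y + 1)))"
proof -
  let ?t = "q ^ (2 * nat y)" and ?Z = "partition_fn q 0"
  let ?a = "\<lambda>k::nat. (-1) ^ k * q ^ (k * (k + 2 * nat y + 1))"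
  have recurrence_sums:
    "(\<lambda>k. (-?t) ^ k * ?t * partition_fn q (- int (Suc k))) sums occupation q (- int 0) y"
  proof (rule sums_alternating_recurrence)
    show "occupation q (- int n) y
      = ?t * (partition_fn q (- int (Suc n)) - occupation q (- int (Suc n)) y)" for n
      using occupation_succ[OF assms, of "- int (Suc n)"] by simp
    show "\<bar>?t\<bar> < 1"
      using assms by (simp add: power_abs power_less_one_iff)
    show "Bseq (\<lambda>n. occupation q (- int n) y)"
    proof (rule BseqI'[where K = ?Z])
      show "norm (occupation q (- int n) y) \<le> ?Z" for n
        using occupation_nonneg[of q "- int n" y]
          order_trans[OF occupation_le_partition_fn[OF assms(1)] partition_fn_neg_le[OF assms(1)]]
        by simp
    qed
  qed
  have summand_eq: "(-?t) ^ k * partition_fn q (- int (Suc k)) = ?Z * ?a k" for k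
  proof -
    have "(-?t) ^ k = (-1) ^ k * q ^ (2 * nat y * k)"
      using power_minus[of ?t k] by (simp add: power_mult)
    then have "(-?t) ^ k * partition_fn q (- int (Suc k))
        = (-1) ^ k * q ^ (2 * nat y * k + Suc k * (Suc k - 1)) * ?Z"
      unfolding partition_fn_neg[OF assms(1)] by (simp add: power_add)
    also have "2 * nat y * k + Suc k * (Suc k - 1) = k * (k + 2 * nat y + 1)"
      by (simp add: algebra_simps)
    finally show ?thesis
      by simp
  qed
  have "(-?t) ^ k * ?t * partition_fn q (- int (Suc k)) = ?t * ?Z * ?a k" for k
    using summand_eq[of k] by (metis mult.assoc mult.commute)
  then have sums: "(\<lambda>k. ?t * ?Z * ?a k) sums occupation q 0 y"
    using recurrence_sums by (simp only: of_nat_0 minus_zero)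
  have "summable ?a"
  proof (rule summable_comparison_test'[OF summable_geometric[of "\<bar>q\<bar>"]])
    show "norm (?a k) \<le> \<bar>q\<bar> ^ k" for k
    proof -
      have "norm (?a k) = \<bar>q\<bar> ^ (k * (k + 2 * nat y + 1))"
        by (simp add: abs_mult power_abs)
      also have "\<dots> \<le> \<bar>q\<bar> ^ k"
        using assms(1) by (intro power_decreasing) auto
      finally show ?thesis .
    qed
  qed (use assms(1) in simp)
  then show ?thesis
    using sums_unique[OF sums] by (simp add: suminf_mult)
qed

lemma magn_drop_bounds_pos:
  assumes "\<bar>q\<bar> < 1" "m \<ge> 1"
  shows "0 \<le> magn q (m - 1) - magn q m \<and> magn q (m - 1) - magn q m \<le> q ^ (2 * nat (m - 1))"
proof -
  let ?Z = "partition_fn q 0"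
  have Z: "?Z > 0"
    using one_le_partition_fn_zero[OF assms(1)] by simp
  consider "m = 1" | "m \<ge> 2" using assms(2) by linarith
  then show ?thesis
  proof cases
    case 1
    have "magn q 0 - magn q 1 = 1 - 2 * occupation q 0 0 / ?Z"
      using magn_eq[OF assms(1), of 0] magn_eq[OF assms(1), of 1] occupation_reflect[of q 0]
      by simp
    moreover have "2 * occupation q 0 0 \<le> ?Z"
      using occupation_zero_add_one_le[OF assms(1)] occupation_reflect[of q 0] by simp
    ultimately show ?thesis
      using 1 Z occupation_nonneg[of q 0 0] by simp
  next
    case 2
    have "magn q (m - 1) - magn q m = (occupation q 0 (m - 1) - occupation q 0 m) / ?Z"
      using magn_eq[OF assms(1), of "m - 1"] magn_eq[OF assms(1), of m] 2
      by (simp add: diff_divide_distrib)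
    moreover have "occupation q 0 m \<le> occupation q 0 (m - 1)"
      using occupation_antimono[OF assms(1), of "m - 1"] 2 by simp
    moreover have "occupation q 0 (m - 1) \<le> q ^ (2 * nat (m - 1)) * ?Z"
      using occupation_le[OF assms(1), of "m - 1"] 2 by simp
    ultimately show ?thesis
      using Z occupation_nonneg[of q 0 m] by (simp add: divide_le_eq)
  qed
qed

lemma magn_drop_bounds:
  assumes "\<bar>q\<bar> < 1"
  shows "0 \<le> magn q (m - 1) - magn q m \<and> magn q (m - 1) - magn q m \<le> q ^ (2 * nat \<bar>m - 1\<bar>)"
proof (cases "m \<ge> 1")
  case True
  then show ?thesis
    using magn_drop_bounds_pos[OF assms] by simp
next
  case False
  have "magn q (m - 1) - magn q m = magn q (2 - m - 1) - magn q (2 - m)"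
    using magn_reflect[OF assms, of "m - 1"] magn_reflect[OF assms, of m] by simp
  then show ?thesis
    using magn_drop_bounds_pos[OF assms, of "2 - m"] False by simp
qed

lemma magn_drop_le_exp:
  assumes "0 < q" "q < 1"
  shows "magn q (m - 1) - magn q m \<le> 1 / q\<^sup>2 * exp (2 * ln q * \<bar>m\<bar>)"
proof -
  have "magn q (m - 1) - magn q m \<le> q ^ (2 * nat \<bar>m - 1\<bar>)"
    using magn_drop_bounds[of q m] assms by simp
  also have "\<dots> \<le> q ^ (2 * nat \<bar>m\<bar>) / q\<^sup>2"
  proof -
    have "q ^ (2 * nat \<bar>m - 1\<bar>) * q\<^sup>2 \<le> q ^ (2 * nat \<bar>m\<bar>)"
      unfolding power_add[symmetric] using assms by (intro power_decreasing) auto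
    then show ?thesis
      using assms by (simp add: pos_le_divide_eq)
  qed
  also have "q ^ (2 * nat \<bar>m\<bar>) = exp (2 * ln q * \<bar>m\<bar>)"
  proof -
    have "2 * ln q * \<bar>m\<bar> = real (2 * nat \<bar>m\<bar>) * ln q"
      by simp
    then show ?thesis
      using assms by (simp only: exp_of_nat_mult exp_ln)
  qed
  finally show ?thesis
    by simp
qed

theorem lemmaA:
  fixes q :: real
  assumes "0 < q" and "q < 1"
  shows "(\<forall>x::int. x > 0 \<longrightarrow>
            magn q x = -1/2 + q ^ (2 * nat x) *
              (\<Sum>k. (-1) ^ k * q ^ (k * (k + 2 * nat x + 1))))
       \<and> (\<forall>x::int. x \<le> 0 \<longrightarrow> magn q x = - magn q (1 - x))
       \<and> (\<exists>C c. C > 0 \<and> c > 0 \<and>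
            (\<forall>m::int. 0 \<le> magn q (m - 1) - magn q m \<and>
                      magn q (m - 1) - magn q m \<le> C * exp (- c * real_of_int \<bar>m\<bar>)))"
proof (intro conjI allI impI exI)
  have q: "\<bar>q\<bar> < 1"
    using assms by simp
  show "magn q x = -1/2 + q ^ (2 * nat x) * (\<Sum>k. (-1) ^ k * q ^ (k * (k + 2 * nat x + 1)))"
    if "x > 0" for x :: int
    using magn_eq[OF q, of x] occupation_series[OF q, of x] one_le_partition_fn_zero[OF q] that
    by simp
  show "magn q x = - magn q (1 - x)" for x
    by (rule magn_reflect[OF q])
  show "1 / q\<^sup>2 > 0" "- 2 * ln q > 0"
    using assms by simp_all
  show "0 \<le> magn q (m - 1) - magn q m" for m
    using magn_drop_bounds[OF q, of m] by simp
  show "magn q (m - 1) - magn q m \<le> 1 / q\<^sup>2 * exp (- (- 2 * ln q) * real_of_int \<bar>m\<bar>)" for m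
    using magn_drop_le_exp[OF assms, of m] by simp
qed

end
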